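(* Let $D$ be a smooth irreducible complex projective curve with an action of the dihedral group $D_{2l}=\langle i,j\rangle$ (of order $4l$), where $i,j$ are involutions. Let $C=D/\langle j\rangle$ and let $\beta\in\mathrm{Aut}(C)$ be the automorphism induced by $(ij)^l$. Then $\nu(\beta)=\frac12\big(\nu(i)+\nu((ij)^l)\big)$ if $l$ is odd, and $\nu(\beta)=\frac12\big(\nu(j)+\nu((ij)^l)\big)$ if $l$ is even.
   Context: $\nu(\gamma)$ denotes the number of points fixed by an automorphism $\gamma$. The element $(ij)^l$ is central in $D_{2l}$, so it induces an automorphism of $C=D/\langle j\rangle$. *)

theory Defs
  imports "HOL-Complex_Analysis.Complex_Analysis"
begin

text \<open>A smooth irreducible complex projective curve is modelled (via the classical
equivalence with compact connected Riemann surfaces) as a compact connected Hausdorff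
topological space together with a holomorphic atlas.\<close>

definition chart_on :: "'a topology \<Rightarrow> 'a set \<Rightarrow> ('a \<Rightarrow> complex) \<Rightarrow> bool" where
  "chart_on T U \<phi> \<longleftrightarrow> openin T U \<and> open (\<phi> ` U) \<and>
     homeomorphic_map (subtopology T U) (top_of_set (\<phi> ` U)) \<phi>"

definition riemann_surface :: "'a topology \<Rightarrow> ('a set \<times> ('a \<Rightarrow> complex)) set \<Rightarrow> bool" where
  "riemann_surface T A \<longleftrightarrow> Hausdorff_space T \<and> connected_space T \<and> topspace T \<noteq> {} \<and>
     (\<forall>(U,\<phi>)\<in>A. chart_on T U \<phi>) \<and>
     (\<forall>x\<in>topspace T. \<exists>(U,\<phi>)\<in>A. x \<in> U) \<and>
     (\<forall>(U,\<phi>)\<in>A. \<forall>(V,\<psi>)\<in>A. (\<psi> \<circ> inv_into U \<phi>) holomorphic_on (\<phi> ` (U \<inter> V)))"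

definition compact_riemann_surface :: "'a topology \<Rightarrow> ('a set \<times> ('a \<Rightarrow> complex)) set \<Rightarrow> bool" where
  "compact_riemann_surface T A \<longleftrightarrow> riemann_surface T A \<and> compact_space T"

definition holomorphic_self_map :: "'a topology \<Rightarrow> ('a set \<times> ('a \<Rightarrow> complex)) set \<Rightarrow> ('a \<Rightarrow> 'a) \<Rightarrow> bool" where
  "holomorphic_self_map T A f \<longleftrightarrow> continuous_map T T f \<and>
     (\<forall>(U,\<phi>)\<in>A. \<forall>(V,\<psi>)\<in>A. (\<psi> \<circ> f \<circ> inv_into U \<phi>) holomorphic_on (\<phi> ` {x\<in>U. f x \<in> V}))"

definition curve_automorphism :: "'a topology \<Rightarrow> ('a set \<times> ('a \<Rightarrow> complex)) set \<Rightarrow> ('a \<Rightarrow> 'a) \<Rightarrow> bool" where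
  "curve_automorphism T A f \<longleftrightarrow> bij_betw f (topspace T) (topspace T) \<and>
     holomorphic_self_map T A f \<and> holomorphic_self_map T A (inv_into (topspace T) f)"

definition map_eq_on :: "'a topology \<Rightarrow> ('a \<Rightarrow> 'a) \<Rightarrow> ('a \<Rightarrow> 'a) \<Rightarrow> bool" where
  "map_eq_on T f g \<longleftrightarrow> (\<forall>x\<in>topspace T. f x = g x)"

definition nu :: "'a topology \<Rightarrow> ('a \<Rightarrow> 'a) \<Rightarrow> nat" where
  "nu T g = card {x \<in> topspace T. g x = x}"

text \<open>Points of the quotient curve D / <j> (j an involution) are the orbits {x, j x}.\<close>
definition quot_points :: "'a topology \<Rightarrow> ('a \<Rightarrow> 'a) \<Rightarrow> 'a set set" where
  "quot_points T j = (\<lambda>x. {x, j x}) ` topspace T"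

text \<open>Number of fixed points of the automorphism of D / <j> induced by c
  (c commuting with j): orbits P with c ` P = P.\<close>
definition nu_quot :: "'a topology \<Rightarrow> ('a \<Rightarrow> 'a) \<Rightarrow> ('a \<Rightarrow> 'a) \<Rightarrow> nat" where
  "nu_quot T j c = card {P \<in> quot_points T j. c ` P = P}"

end

theory Submission
  imports Defs
begin

text \<open>Write \<open>c = (ij)\<^sup>l\<close>; it commutes with \<open>j\<close> because \<open>ij\<close> has order \<open>2l\<close>. A point
  \<open>{x, jx}\<close> of \<open>D/\<langle>j\<rangle>\<close> is fixed by \<open>\<beta>\<close> iff \<open>cx = x\<close> or \<open>jcx = x\<close>. A free orbit fixed by
  \<open>\<beta>\<close> thus contains two fixed points of exactly one of \<open>c\<close>, \<open>jc\<close>, and a \<open>j\<close>-fixed point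
  fixed by \<open>\<beta>\<close> is fixed by both, so \<open>2\<nu>(\<beta>) = \<nu>(c) + \<nu>(jc)\<close>. Finally \<open>jc\<close> is conjugate to
  \<open>i\<close> for odd \<open>l\<close> and to \<open>j\<close> for even \<open>l\<close>. All fixed point sets involved are finite by the
  identity theorem: on a compact connected Riemann surface, infinitely many fixed points of a
  holomorphic self-map accumulate, and the set of points near which the map is the identity is
  then nonempty, open and closed.\<close>

lemma chart_onD:
  assumes "chart_on T U \<phi>"
  shows "openin T U" "U \<subseteq> topspace T" "inj_on \<phi> U" "open (\<phi> ` U)"
proof -
  show U_open: "openin T U" using assms by (simp add: chart_on_def)
  show U_sub: "U \<subseteq> topspace T" using openin_subset[OF U_open] .
  show "open (\<phi> ` U)" using assms by (simp add: chart_on_def)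
  have "homeomorphic_map (subtopology T U) (top_of_set (\<phi> ` U)) \<phi>"
    using assms by (simp add: chart_on_def)
  from homeomorphic_imp_injective_map[OF this]
  have "inj_on \<phi> (topspace (subtopology T U))" .
  then show "inj_on \<phi> U" using U_sub by (simp add: Int_absorb1)
qed

lemma chart_image_open:
  assumes c: "chart_on T U \<phi>" and W: "openin T W" "W \<subseteq> U"
  shows "open (\<phi> ` W)"
proof -
  have h: "homeomorphic_map (subtopology T U) (top_of_set (\<phi> ` U)) \<phi>"
    using c by (simp add: chart_on_def)
  have "openin (subtopology T U) W"
    using W unfolding openin_subtopology by blast
  moreover have "W \<subseteq> topspace (subtopology T U)"
    using W openin_subset by fastforce
  ultimately have "openin (top_of_set (\<phi> ` U)) (\<phi> ` W)"
    using homeomorphic_map_openness[OF h] by blast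
  then show ?thesis using chart_onD(4)[OF c] openin_open_trans by blast
qed

lemma chart_preimage_openin:
  assumes c: "chart_on T U \<phi>" and B: "open B"
  shows "openin T {x\<in>U. \<phi> x \<in> B}"
proof -
  have h: "continuous_map (subtopology T U) (top_of_set (\<phi> ` U)) \<phi>"
    using c by (simp add: chart_on_def homeomorphic_imp_continuous_map)
  have "openin (top_of_set (\<phi> ` U)) (\<phi> ` U \<inter> B)"
    using B by (simp add: openin_open_Int)
  then have "openin (subtopology T U) {x \<in> topspace (subtopology T U). \<phi> x \<in> \<phi> ` U \<inter> B}"
    using openin_continuous_map_preimage[OF h] by blast
  moreover have "{x \<in> topspace (subtopology T U). \<phi> x \<in> \<phi> ` U \<inter> B} = {x\<in>U. \<phi> x \<in> B}"
    using chart_onD(2)[OF c] by auto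
  ultimately show ?thesis using openin_trans_full chart_onD(1)[OF c] by metis
qed

lemma riemann_surfaceD:
  assumes "riemann_surface T A"
  shows "Hausdorff_space T" "connected_space T"
    "(U, \<phi>) \<in> A \<Longrightarrow> chart_on T U \<phi>"
    "x \<in> topspace T \<Longrightarrow> \<exists>U \<phi>. (U, \<phi>) \<in> A \<and> x \<in> U"
    "(U, \<phi>) \<in> A \<Longrightarrow> (V, \<psi>) \<in> A \<Longrightarrow> (\<psi> \<circ> inv_into U \<phi>) holomorphic_on (\<phi> ` (U \<inter> V))"
  using assms unfolding riemann_surface_def by (fast, fast, fast, fast, blast)

lemma holomorphic_self_mapD:
  assumes "holomorphic_self_map T A f"
  shows "continuous_map T T f"
    "(U, \<phi>) \<in> A \<Longrightarrow> (V, \<psi>) \<in> A \<Longrightarrow>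
      (\<psi> \<circ> f \<circ> inv_into U \<phi>) holomorphic_on (\<phi> ` {x\<in>U. f x \<in> V})"
  using assms unfolding holomorphic_self_map_def by fast+

lemma chart_islimpt_image:
  assumes c: "chart_on T U \<phi>" and N: "openin T N" "N \<subseteq> U" "x \<in> N"
    and x: "x \<in> T derived_set_of S"
  shows "\<phi> x islimpt \<phi> ` (S \<inter> N)"
proof (rule islimptI)
  fix t assume t: "\<phi> x \<in> t" "open t"
  define V where "V = N \<inter> {y\<in>U. \<phi> y \<in> t}"
  have "openin T V"
    unfolding V_def using N(1) chart_preimage_openin[OF c t(2)] by (rule openin_Int)
  moreover have "x \<in> V" using N(2,3) t(1) by (auto simp: V_def)
  ultimately obtain y where "y \<noteq> x" "y \<in> S" "y \<in> V"
    using x unfolding in_derived_set_of by blast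
  then have y: "y \<noteq> x" "y \<in> S" "y \<in> N" "\<phi> y \<in> t" by (auto simp: V_def)
  then have "\<phi> y \<noteq> \<phi> x" using N chart_onD(3)[OF c] by (meson inj_onD subsetD)
  then show "\<exists>z\<in>\<phi> ` (S \<inter> N). z \<in> t \<and> z \<noteq> \<phi> x" using y by blast
qed

lemma holomorphic_self_map_fixes_neighbourhood:
  assumes rs: "riemann_surface T A" and hf: "holomorphic_self_map T A f"
    and x: "x \<in> T derived_set_of {y\<in>topspace T. f y = y}"
  obtains N where "openin T N" "x \<in> N" "\<forall>y\<in>N. f y = y"
proof -
  let ?F = "{y\<in>topspace T. f y = y}"
  have cf: "continuous_map T T f" using holomorphic_self_mapD(1)[OF hf] .
  have "closedin T ?F"
    using closedin_continuous_maps_eq[OF riemann_surfaceD(1)[OF rs] cf continuous_map_id] by simp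
  then have "T derived_set_of ?F \<subseteq> ?F" by (simp add: closedin_contains_derived_set)
  then have xF: "x \<in> ?F" using x by (rule subsetD)
  then obtain U \<phi> where UA: "(U, \<phi>) \<in> A" and xU: "x \<in> U"
    using riemann_surfaceD(4)[OF rs] by blast
  have c: "chart_on T U \<phi>" using riemann_surfaceD(3)[OF rs UA] .
  note inj = chart_onD(3)[OF c]
  define W where "W = {y\<in>U. f y \<in> U}"
  have "openin T W"
    unfolding W_def using openin_continuous_map_preimage_gen[OF cf chart_onD(1)[OF c] chart_onD(1)[OF c]] .
  then have "open (\<phi> ` W)" using chart_image_open[OF c] by (auto simp: W_def)
  moreover have "\<phi> x \<in> \<phi> ` W" using xF xU by (simp add: W_def)
  ultimately obtain e where e: "e > 0" "ball (\<phi> x) e \<subseteq> \<phi> ` W"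
    using open_contains_ball by blast
  define g where "g = \<phi> \<circ> f \<circ> inv_into U \<phi>"
  have g_hol: "g holomorphic_on ball (\<phi> x) e"
    using holomorphic_self_mapD(2)[OF hf UA UA] e(2) unfolding g_def W_def by (rule holomorphic_on_subset)
  have g_chart: "g (\<phi> y) = \<phi> (f y)" if "y \<in> U" for y
    using that inj by (simp add: g_def)
  define N where "N = {y\<in>U. \<phi> y \<in> ball (\<phi> x) e}"
  have N_open: "openin T N" unfolding N_def by (rule chart_preimage_openin[OF c open_ball])
  have xN: "x \<in> N" using xU e(1) by (simp add: N_def)
  have NW: "N \<subseteq> W"
  proof
    fix y assume y: "y \<in> N"
    then obtain w where w: "w \<in> W" "\<phi> w = \<phi> y" using e(2) by (auto simp: N_def)
    then have "w = y" using y inj by (auto simp: N_def W_def inj_on_def)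
    then show "y \<in> W" using w by simp
  qed
  have g_id: "g z = z" if "z \<in> ball (\<phi> x) e" for z
  proof -
    have "(\<lambda>z. g z - z) z = 0"
    proof (rule analytic_continuation[where f="\<lambda>z. g z - z" and S="ball (\<phi> x) e"
          and U="\<phi> ` (?F \<inter> N)" and \<xi>="\<phi> x"])
      show "(\<lambda>z. g z - z) holomorphic_on ball (\<phi> x) e" using g_hol by (intro holomorphic_intros)
      show "\<phi> x islimpt \<phi> ` (?F \<inter> N)"
        using chart_islimpt_image[OF c N_open _ xN x] by (simp add: N_def)
      show "g w - w = 0" if "w \<in> \<phi> ` (?F \<inter> N)" for w
        using that g_chart by (auto simp: N_def)
    qed (use that e(1) in \<open>auto simp: N_def\<close>)
    then show ?thesis by simp
  qed
  have "\<forall>y\<in>N. f y = y"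
  proof
    fix y assume y: "y \<in> N"
    then have "y \<in> U" "\<phi> y \<in> ball (\<phi> x) e" "f y \<in> U" using NW by (auto simp: N_def W_def)
    then show "f y = y" using g_id g_chart inj by (metis inj_onD)
  qed
  then show ?thesis using that N_open xN by blast
qed

lemma holomorphic_self_map_eq_id_if_infinite_fixpoints:
  assumes crs: "compact_riemann_surface T A" and hf: "holomorphic_self_map T A f"
    and inf: "infinite {y\<in>topspace T. f y = y}"
  shows "\<forall>x\<in>topspace T. f x = x"
proof -
  have rs: "riemann_surface T A" and cs: "compact_space T"
    using crs by (auto simp: compact_riemann_surface_def)
  let ?F = "{y\<in>topspace T. f y = y}"
  define Z where "Z = {x\<in>topspace T. \<exists>N. openin T N \<and> x \<in> N \<and> (\<forall>y\<in>N. f y = y)}"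
  have ZF: "Z \<subseteq> ?F" unfolding Z_def by blast
  have derived_Z: "T derived_set_of ?F \<subseteq> Z"
  proof
    fix x assume x: "x \<in> T derived_set_of ?F"
    then obtain N where N: "openin T N" "x \<in> N" "\<forall>y\<in>N. f y = y"
      by (rule holomorphic_self_map_fixes_neighbourhood[OF rs hf])
    have "x \<in> topspace T" using x by (simp add: in_derived_set_of)
    with N show "x \<in> Z" unfolding Z_def by blast
  qed
  have "openin T Z"
    unfolding openin_subopen[of T Z]
  proof
    fix x assume "x \<in> Z"
    then obtain N where N: "openin T N" "x \<in> N" "\<forall>y\<in>N. f y = y" by (auto simp: Z_def)
    have "N \<subseteq> Z"
    proof
      fix y assume "y \<in> N"
      moreover have "N \<subseteq> topspace T" using N(1) by (rule openin_subset)
      ultimately show "y \<in> Z" using N unfolding Z_def by blast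
    qed
    then show "\<exists>T'. openin T T' \<and> x \<in> T' \<and> T' \<subseteq> Z" using N by blast
  qed
  moreover have "closedin T Z"
  proof -
    have "Z \<subseteq> topspace T" by (auto simp: Z_def)
    moreover have "T derived_set_of Z \<subseteq> Z" using derived_Z derived_set_of_mono[OF ZF] by blast
    ultimately show ?thesis by (simp add: closedin_contains_derived_set)
  qed
  moreover have "Z \<noteq> {}"
  proof -
    obtain x where "x \<in> T derived_set_of ?F"
      using compact_space_imp_Bolzano_Weierstrass[OF cs inf] by blast
    then show ?thesis using derived_Z by blast
  qed
  ultimately have "Z = topspace T"
    using riemann_surfaceD(2)[OF rs] unfolding connected_space_clopen_in by blast
  then show ?thesis using ZF by blast
qed

lemma finite_fixpoints_holomorphic_self_map:
  assumes "compact_riemann_surface T A" "holomorphic_self_map T A f" "\<not> map_eq_on T f id"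
  shows "finite {x\<in>topspace T. f x = x}"
proof (rule ccontr)
  assume "infinite {x\<in>topspace T. f x = x}"
  then have "\<forall>x\<in>topspace T. f x = x"
    by (rule holomorphic_self_map_eq_id_if_infinite_fixpoints[OF assms(1,2)])
  with assms(3) show False by (simp add: map_eq_on_def)
qed

lemma holomorphic_self_mapI:
  assumes "continuous_map T T f"
    and "\<And>U \<phi> V \<psi>. (U, \<phi>) \<in> A \<Longrightarrow> (V, \<psi>) \<in> A \<Longrightarrow>
      (\<psi> \<circ> f \<circ> inv_into U \<phi>) holomorphic_on (\<phi> ` {x\<in>U. f x \<in> V})"
  shows "holomorphic_self_map T A f"
  using assms unfolding holomorphic_self_map_def by auto

lemma holomorphic_self_map_id:
  assumes "riemann_surface T A"
  shows "holomorphic_self_map T A id"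
proof (rule holomorphic_self_mapI[OF continuous_map_id])
  fix U \<phi> V \<psi> assume "(U, \<phi>) \<in> A" "(V, \<psi>) \<in> A"
  moreover have "{x\<in>U. id x \<in> V} = U \<inter> V" by auto
  ultimately show "(\<psi> \<circ> id \<circ> inv_into U \<phi>) holomorphic_on (\<phi> ` {x\<in>U. id x \<in> V})"
    using riemann_surfaceD(5)[OF assms] by simp
qed

lemma holomorphic_self_map_comp_in_charts:
  assumes rs: "riemann_surface T A"
    and hf: "holomorphic_self_map T A f" and hg: "holomorphic_self_map T A g"
    and UA: "(U, \<phi>) \<in> A" and WA: "(W, \<kappa>) \<in> A" and VA: "(V, \<psi>) \<in> A"
  defines "D \<equiv> {x\<in>U. g x \<in> W \<and> f (g x) \<in> V}"
  shows "open (\<phi> ` D)" "(\<psi> \<circ> (f \<circ> g) \<circ> inv_into U \<phi>) holomorphic_on \<phi> ` D"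
proof -
  have cf: "continuous_map T T f" and cg: "continuous_map T T g"
    using holomorphic_self_mapD(1) hf hg by auto
  have cU: "chart_on T U \<phi>" and cW: "chart_on T W \<kappa>"
    using riemann_surfaceD(3)[OF rs] UA WA by auto
  have "openin T {x\<in>U. g x \<in> W}"
    using openin_continuous_map_preimage_gen[OF cg chart_onD(1)[OF cU] chart_onD(1)[OF cW]] .
  then have "openin T {x\<in>{x\<in>U. g x \<in> W}. (f \<circ> g) x \<in> V}"
    using openin_continuous_map_preimage_gen[OF continuous_map_compose[OF cg cf] _
        chart_onD(1)[OF riemann_surfaceD(3)[OF rs VA]]] by blast
  then show "open (\<phi> ` D)" using chart_image_open[OF cU] by (auto simp: D_def)
  define h1 where "h1 = \<kappa> \<circ> g \<circ> inv_into U \<phi>"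
  define h2 where "h2 = \<psi> \<circ> f \<circ> inv_into W \<kappa>"
  have "h1 holomorphic_on \<phi> ` D"
    using holomorphic_self_mapD(2)[OF hg UA WA] unfolding h1_def
    by (rule holomorphic_on_subset) (auto simp: D_def)
  moreover have "h2 holomorphic_on \<kappa> ` {w\<in>W. f w \<in> V}"
    unfolding h2_def using holomorphic_self_mapD(2)[OF hf WA VA] .
  moreover have "h1 ` (\<phi> ` D) \<subseteq> \<kappa> ` {w\<in>W. f w \<in> V}"
    using chart_onD(3)[OF cU] by (auto simp: h1_def D_def)
  ultimately have "(h2 \<circ> h1) holomorphic_on \<phi> ` D"
    by (rule holomorphic_on_compose_gen)
  moreover have "(h2 \<circ> h1) z = (\<psi> \<circ> (f \<circ> g) \<circ> inv_into U \<phi>) z" if "z \<in> \<phi> ` D" for z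
    using that chart_onD(3)[OF cU] chart_onD(3)[OF cW] by (auto simp: h1_def h2_def D_def)
  ultimately show "(\<psi> \<circ> (f \<circ> g) \<circ> inv_into U \<phi>) holomorphic_on \<phi> ` D"
    by (rule holomorphic_transform)
qed

lemma holomorphic_self_map_comp:
  assumes rs: "riemann_surface T A"
    and hf: "holomorphic_self_map T A f" and hg: "holomorphic_self_map T A g"
  shows "holomorphic_self_map T A (f \<circ> g)"
proof (rule holomorphic_self_mapI)
  have cg: "continuous_map T T g" using holomorphic_self_mapD(1)[OF hg] .
  show "continuous_map T T (f \<circ> g)"
    using continuous_map_compose[OF cg holomorphic_self_mapD(1)[OF hf]] .
  fix U \<phi> V \<psi> assume UA: "(U, \<phi>) \<in> A" and VA: "(V, \<psi>) \<in> A"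
  let ?D = "\<lambda>p. {x\<in>U. g x \<in> fst p \<and> f (g x) \<in> V}"
  have "(\<psi> \<circ> (f \<circ> g) \<circ> inv_into U \<phi>) holomorphic_on (\<Union>p\<in>A. \<phi> ` ?D p)"
  proof (rule holomorphic_on_UN_open)
    fix p assume "p \<in> A"
    then have "(fst p, snd p) \<in> A" by simp
    note local = holomorphic_self_map_comp_in_charts[OF rs hf hg UA this VA]
    show "open (\<phi> ` ?D p)" by (rule local(1))
    show "(\<psi> \<circ> (f \<circ> g) \<circ> inv_into U \<phi>) holomorphic_on \<phi> ` ?D p" by (rule local(2))
  qed
  moreover have "\<phi> ` {x\<in>U. (f \<circ> g) x \<in> V} \<subseteq> (\<Union>p\<in>A. \<phi> ` ?D p)"
  proof
    fix z assume "z \<in> \<phi> ` {x\<in>U. (f \<circ> g) x \<in> V}"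
    then obtain x where x: "x \<in> U" "f (g x) \<in> V" "z = \<phi> x" by auto
    have "x \<in> topspace T" using x(1) chart_onD(2)[OF riemann_surfaceD(3)[OF rs UA]] by blast
    then have "g x \<in> topspace T" using cg by (auto simp: continuous_map_def)
    then obtain W \<kappa> where W: "(W, \<kappa>) \<in> A" "g x \<in> W" using riemann_surfaceD(4)[OF rs] by blast
    then have "x \<in> ?D (W, \<kappa>)" using x by simp
    then show "z \<in> (\<Union>p\<in>A. \<phi> ` ?D p)" using W(1) x(3) by blast
  qed
  ultimately show "(\<psi> \<circ> (f \<circ> g) \<circ> inv_into U \<phi>) holomorphic_on \<phi> ` {x\<in>U. (f \<circ> g) x \<in> V}"
    by (rule holomorphic_on_subset)
qed

lemma holomorphic_self_map_funpow:
  assumes "riemann_surface T A" "holomorphic_self_map T A f"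
  shows "holomorphic_self_map T A (f ^^ n)"
proof (induction n)
  case 0
  then show ?case using holomorphic_self_map_id[OF assms(1)] by (simp add: id_def)
next
  case (Suc n)
  then show ?case using holomorphic_self_map_comp[OF assms(1,2)] by (simp only: funpow.simps)
qed

lemma involution_orbit_eq:
  assumes "x \<in> S" "y \<in> S" "\<forall>x\<in>S. j (j x) = x" and "{x, j x} \<inter> {y, j y} \<noteq> {}"
  shows "{x, j x} = {y, j y}"
  using assms by (auto; metis)

lemma card_involution_orbits:
  assumes fin: "finite S" and jS: "\<forall>x\<in>S. j x \<in> S" and jj: "\<forall>x\<in>S. j (j x) = x"
  shows "2 * card ((\<lambda>x. {x, j x}) ` S) = card S + card {x\<in>S. j x = x}"
proof -
  let ?orb = "\<lambda>x. {x, j x}"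
  define F where "F = {x\<in>S. j x = x}"
  define M where "M = S - F"
  have fF: "finite F" and fM: "finite M" using fin by (auto simp: F_def M_def)
  have "card (?orb ` F) = card F"
    by (rule card_image) (auto simp: inj_on_def F_def)
  moreover have "card M = 2 * card (?orb ` M)"
  proof -
    have "M = \<Union> (?orb ` M)" using jS jj by (auto simp: M_def F_def)
    moreover have "pairwise disjnt (?orb ` M)"
    proof (rule pairwiseI)
      fix P Q assume "P \<in> ?orb ` M" "Q \<in> ?orb ` M" "P \<noteq> Q"
      then obtain x y where "x \<in> S" "y \<in> S" "P = {x, j x}" "Q = {y, j y}"
        by (auto simp: M_def)
      with \<open>P \<noteq> Q\<close> show "disjnt P Q"
        unfolding disjnt_def using involution_orbit_eq[OF _ _ jj] by blast
    qed
    ultimately have "card M = sum card (?orb ` M)"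
      using card_Union_disjoint[of "?orb ` M"] by auto
    also have "\<dots> = 2 * card (?orb ` M)"
    proof -
      have "card P = 2" if P: "P \<in> ?orb ` M" for P
      proof -
        obtain x where "x \<in> M" "P = {x, j x}" using P by blast
        moreover from \<open>x \<in> M\<close> have "x \<noteq> j x" by (auto simp: M_def F_def)
        ultimately show ?thesis by simp
      qed
      then show ?thesis by simp
    qed
    finally show ?thesis .
  qed
  moreover have "card S = card F + card M"
  proof -
    have "S = F \<union> M" "F \<inter> M = {}" by (auto simp: M_def F_def)
    then show ?thesis using card_Un_disjoint[OF fF fM] by simp
  qed
  moreover have "card (?orb ` S) = card (?orb ` F) + card (?orb ` M)"
  proof -
    have "?orb ` S = ?orb ` F \<union> ?orb ` M" by (auto simp: M_def F_def)
    moreover have "?orb ` F \<inter> ?orb ` M = {}"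
    proof (rule equals0I)
      fix P assume "P \<in> ?orb ` F \<inter> ?orb ` M"
      then obtain x y where "j x = x" "P = {x, j x}" "y \<in> M" "P = {y, j y}"
        by (auto simp: F_def)
      then show False by (auto simp: M_def F_def)
    qed
    ultimately show ?thesis
      using card_Un_disjoint[OF finite_imageI[OF fF] finite_imageI[OF fM]] by simp
  qed
  ultimately show ?thesis by (simp add: F_def)
qed

lemma orbit_invariant_iff:
  assumes x: "x \<in> X" and jj: "\<forall>x\<in>X. j (j x) = x"
    and cX: "\<forall>x\<in>X. c x \<in> X" and jc: "\<forall>x\<in>X. j (c x) = c (j x)"
  shows "c ` {x, j x} = {x, j x} \<longleftrightarrow> c x = x \<or> j (c x) = x"
proof -
  have "c ` {x, j x} = {c x, j (c x)}" using jc x by simp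
  moreover have "c x = j x \<longleftrightarrow> j (c x) = x" using jj cX x by metis
  ultimately show ?thesis by (auto simp: doubleton_eq_iff)
qed

lemma card_invariant_orbits:
  assumes jX: "\<forall>x\<in>X. j x \<in> X" and jj: "\<forall>x\<in>X. j (j x) = x"
    and cX: "\<forall>x\<in>X. c x \<in> X" and jc: "\<forall>x\<in>X. j (c x) = c (j x)"
    and fin_c: "finite {x\<in>X. c x = x}" and fin_jc: "finite {x\<in>X. j (c x) = x}"
  shows "2 * card {P \<in> (\<lambda>x. {x, j x}) ` X. c ` P = P}
    = card {x\<in>X. c x = x} + card {x\<in>X. j (c x) = x}"
proof -
  define S where "S = {x\<in>X. c x = x} \<union> {x\<in>X. j (c x) = x}"
  have fin: "finite S" using fin_c fin_jc by (simp add: S_def)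
  have SX: "S \<subseteq> X" by (auto simp: S_def)
  have jS: "\<forall>x\<in>S. j x \<in> S"
    using jX jj cX jc by (auto simp: S_def)
  have "{P \<in> (\<lambda>x. {x, j x}) ` X. c ` P = P} = (\<lambda>x. {x, j x}) ` S"
    using orbit_invariant_iff[OF _ jj cX jc] by (auto simp: S_def)
  moreover have "{x\<in>X. c x = x} \<inter> {x\<in>X. j (c x) = x} = {x\<in>S. j x = x}"
    using jj cX jc by (auto simp: S_def)
  moreover have "2 * card ((\<lambda>x. {x, j x}) ` S) = card S + card {x\<in>S. j x = x}"
    using card_involution_orbits[OF fin jS] jj SX by blast
  ultimately show ?thesis
    using card_Un_Int[OF fin_c fin_jc] by (simp add: S_def)
qed

lemma funpow_closed: "\<forall>x\<in>X. f x \<in> X \<Longrightarrow> x \<in> X \<Longrightarrow> (f ^^ n) x \<in> X"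
  by (induction n) auto

lemma funpow_swap_comp: "j (((i \<circ> j) ^^ n) x) = ((j \<circ> i) ^^ n) (j x)"
  by (induction n) auto

lemma funpow_involutions_cancel:
  assumes iX: "\<forall>x\<in>X. i x \<in> X" and jX: "\<forall>x\<in>X. j x \<in> X"
    and ii: "\<forall>x\<in>X. i (i x) = x" and jj: "\<forall>x\<in>X. j (j x) = x" and x: "x \<in> X"
  shows "((j \<circ> i) ^^ n) (((i \<circ> j) ^^ n) x) = x"
proof (induction n)
  case (Suc n)
  have "((i \<circ> j) ^^ n) x \<in> X" using funpow_closed[of X "i \<circ> j"] iX jX x by auto
  have A: "(i \<circ> j) ^^ Suc n = (i \<circ> j) \<circ> (i \<circ> j) ^^ n" by (rule funpow.simps(2))
  have B: "(j \<circ> i) ^^ Suc n = (j \<circ> i) ^^ n \<circ> (j \<circ> i)" by (rule funpow_Suc_right)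
  have "((j \<circ> i) ^^ Suc n) (((i \<circ> j) ^^ Suc n) x)
      = ((j \<circ> i) ^^ n) (j (i (i (j (((i \<circ> j) ^^ n) x)))))"
    by (simp only: A B comp_apply)
  also have "\<dots> = ((j \<circ> i) ^^ n) (((i \<circ> j) ^^ n) x)"
    using \<open>((i \<circ> j) ^^ n) x \<in> X\<close> ii jj jX by simp
  also have "\<dots> = x" by (rule Suc.IH)
  finally show ?case .
qed simp

lemma bij_betw_fixpoints_conj:
  assumes gX: "\<forall>x\<in>X. g x \<in> X" and g'X: "\<forall>x\<in>X. g' x \<in> X"
    and g'g: "\<forall>x\<in>X. g' (g x) = x" and gg': "\<forall>x\<in>X. g (g' x) = x"
    and hX: "\<forall>x\<in>X. h x \<in> X"
  shows "bij_betw g {x\<in>X. g' (h (g x)) = x} {y\<in>X. h y = y}"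
proof (rule bij_betw_byWitness[where f'=g'])
  show "g ` {x\<in>X. g' (h (g x)) = x} \<subseteq> {y\<in>X. h y = y}"
    using gX hX gg' by force
  show "g' ` {y\<in>X. h y = y} \<subseteq> {x\<in>X. g' (h (g x)) = x}"
    using g'X gg' by auto
qed (use g'g gg' in auto)

context
  fixes X :: "'a set" and i j :: "'a \<Rightarrow> 'a"
  assumes iX: "\<forall>x\<in>X. i x \<in> X" and jX: "\<forall>x\<in>X. j x \<in> X"
    and ii: "\<forall>x\<in>X. i (i x) = x" and jj: "\<forall>x\<in>X. j (j x) = x"
begin

lemma rotation_funpow_closed: "x \<in> X \<Longrightarrow> ((i \<circ> j) ^^ n) x \<in> X" "x \<in> X \<Longrightarrow> ((j \<circ> i) ^^ n) x \<in> X"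
  using funpow_closed[of X "i \<circ> j"] funpow_closed[of X "j \<circ> i"] iX jX by auto

lemma reflection_commutes_half_turn:
  assumes order: "\<forall>x\<in>X. ((i \<circ> j) ^^ (2 * l)) x = x" and x: "x \<in> X"
  shows "j (((i \<circ> j) ^^ l) x) = ((i \<circ> j) ^^ l) (j x)"
proof -
  have "((j \<circ> i) ^^ l) y = ((i \<circ> j) ^^ l) y" if y: "y \<in> X" for y
  proof -
    have "((i \<circ> j) ^^ l) (((i \<circ> j) ^^ l) y) = y"
      using order y by (simp add: mult_2 funpow_add)
    then show ?thesis
      using funpow_involutions_cancel[OF iX jX ii jj rotation_funpow_closed(1)[OF y]] by metis
  qed
  then show ?thesis using funpow_swap_comp jX x by metis
qed

text \<open>With \<open>r = ij\<close> and \<open>s = ji = r\<inverse>\<close> on \<open>X\<close>: \<open>j r\<^bsup>2m+1\<^esup> = (s\<^sup>m j) i (j r\<^sup>m)\<close> and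
  \<open>j r\<^bsup>2m\<^esup> = s\<^sup>m j r\<^sup>m\<close>.\<close>

lemma bij_betw_fixpoints_reflection_rotation:
  obtains g where "bij_betw g {x\<in>X. j (((i \<circ> j) ^^ l) x) = x} {x\<in>X. (if odd l then i else j) x = x}"
proof -
  have rs: "((i \<circ> j) ^^ m) (((j \<circ> i) ^^ m) x) = x" and sr: "((j \<circ> i) ^^ m) (((i \<circ> j) ^^ m) x) = x"
    if "x \<in> X" for x m
    using funpow_involutions_cancel[OF jX iX jj ii that] funpow_involutions_cancel[OF iX jX ii jj that]
    by simp_all
  show ?thesis
  proof (cases "odd l")
    case True
    then obtain m where "l = 2 * m + 1" by (rule oddE)
    then have l: "l = m + Suc m" by simp
    have "bij_betw (j \<circ> (i \<circ> j) ^^ m)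
        {x\<in>X. ((j \<circ> i) ^^ m \<circ> j) (i ((j \<circ> (i \<circ> j) ^^ m) x)) = x} {x\<in>X. i x = x}"
    proof (rule bij_betw_fixpoints_conj)
      show "\<forall>x\<in>X. (j \<circ> (i \<circ> j) ^^ m) x \<in> X" "\<forall>x\<in>X. ((j \<circ> i) ^^ m \<circ> j) x \<in> X"
        using jX rotation_funpow_closed by simp_all
      show "\<forall>x\<in>X. ((j \<circ> i) ^^ m \<circ> j) ((j \<circ> (i \<circ> j) ^^ m) x) = x"
        using jj sr rotation_funpow_closed by simp
      show "\<forall>x\<in>X. (j \<circ> (i \<circ> j) ^^ m) (((j \<circ> i) ^^ m \<circ> j) x) = x"
        using jj jX rs by simp
    qed (rule iX)
    moreover have "j (((i \<circ> j) ^^ l) x) = ((j \<circ> i) ^^ m \<circ> j) (i ((j \<circ> (i \<circ> j) ^^ m) x))" for x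
    proof -
      have "((i \<circ> j) ^^ l) x = ((i \<circ> j) ^^ m) (i (j (((i \<circ> j) ^^ m) x)))"
        by (simp only: l funpow_add funpow.simps(2) comp_apply)
      then show ?thesis by (simp only: funpow_swap_comp comp_apply)
    qed
    ultimately show ?thesis using that True by simp
  next
    case False
    then obtain m where "l = 2 * m" by (auto elim: evenE)
    then have l: "l = m + m" by simp
    have "bij_betw ((i \<circ> j) ^^ m) {x\<in>X. ((j \<circ> i) ^^ m) (j (((i \<circ> j) ^^ m) x)) = x} {x\<in>X. j x = x}"
      by (rule bij_betw_fixpoints_conj) (use jX rotation_funpow_closed rs sr in blast)+
    moreover have "j (((i \<circ> j) ^^ l) x) = ((j \<circ> i) ^^ m) (j (((i \<circ> j) ^^ m) x))" for x
      by (simp only: l funpow_add funpow_swap_comp comp_apply)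
    ultimately show ?thesis using that False by simp
  qed
qed

end

theorem lemma5p4:
  fixes T :: "'a topology" and A :: "('a set \<times> ('a \<Rightarrow> complex)) set"
    and i j :: "'a \<Rightarrow> 'a" and l :: nat
  assumes curve: "compact_riemann_surface T A"
    and l_pos: "l \<ge> 1"
    and aut_i: "curve_automorphism T A i"
    and aut_j: "curve_automorphism T A j"
    and i_nonid: "\<not> map_eq_on T i id" and i_inv: "map_eq_on T (i \<circ> i) id"
    and j_nonid: "\<not> map_eq_on T j id" and j_inv: "map_eq_on T (j \<circ> j) id"
    and ij_pow: "map_eq_on T ((i \<circ> j) ^^ (2 * l)) id"
    and ij_order: "\<forall>k. 0 < k \<and> k < 2 * l \<longrightarrow> \<not> map_eq_on T ((i \<circ> j) ^^ k) id"
  shows "(odd l \<longrightarrow> real (nu_quot T j ((i \<circ> j) ^^ l))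
            = (real (nu T i) + real (nu T ((i \<circ> j) ^^ l))) / 2)
       \<and> (even l \<longrightarrow> real (nu_quot T j ((i \<circ> j) ^^ l))
            = (real (nu T j) + real (nu T ((i \<circ> j) ^^ l))) / 2)"
proof -
  define X where "X = topspace T"
  define c where "c = (i \<circ> j) ^^ l"
  define h where "h = (if odd l then i else j)"
  have rs: "riemann_surface T A" using curve by (simp add: compact_riemann_surface_def)
  have iX: "\<forall>x\<in>X. i x \<in> X" and jX: "\<forall>x\<in>X. j x \<in> X"
    using aut_i aut_j unfolding curve_automorphism_def X_def by (auto dest: bij_betw_apply)
  have ii: "\<forall>x\<in>X. i (i x) = x" and jj: "\<forall>x\<in>X. j (j x) = x"
    using i_inv j_inv by (auto simp: map_eq_on_def X_def)
  have hol_i: "holomorphic_self_map T A i" and hol_j: "holomorphic_self_map T A j"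
    using aut_i aut_j by (auto simp: curve_automorphism_def)
  have cX: "\<forall>x\<in>X. c x \<in> X" using funpow_closed[of X "i \<circ> j"] iX jX by (auto simp: c_def)
  have jc: "\<forall>x\<in>X. j (c x) = c (j x)"
    using reflection_commutes_half_turn[OF iX jX ii jj] ij_pow by (simp add: c_def map_eq_on_def X_def)
  have fin_c: "finite {x\<in>X. c x = x}"
    using finite_fixpoints_holomorphic_self_map[OF curve] ij_order l_pos
      holomorphic_self_map_funpow[OF rs holomorphic_self_map_comp[OF rs hol_i hol_j]]
    by (simp add: c_def X_def)
  obtain g where g: "bij_betw g {x\<in>X. j (c x) = x} {x\<in>X. h x = x}"
    using bij_betw_fixpoints_reflection_rotation[OF iX jX ii jj] unfolding c_def h_def .
  have "finite {x\<in>X. h x = x}"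
    using finite_fixpoints_holomorphic_self_map[OF curve] hol_i hol_j i_nonid j_nonid
    by (simp add: h_def X_def)
  then have fin_jc: "finite {x\<in>X. j (c x) = x}" using bij_betw_finite[OF g] by simp
  have count: "2 * nu_quot T j c = nu T h + nu T c"
    using card_invariant_orbits[OF jX jj cX jc fin_c fin_jc] bij_betw_same_card[OF g]
    by (simp add: nu_quot_def quot_points_def nu_def X_def)
  have "2 * real (nu_quot T j c) = real (nu T h) + real (nu T c)"
    using arg_cong[where f = real, OF count] by simp
  then have "real (nu_quot T j c) = (real (nu T h) + real (nu T c)) / 2" by simp
  then show ?thesis by (simp add: c_def h_def)
qed

end
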